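(* Let $D$ be a positive squarefree integer with $N(\varepsilon)=-1$, and let $\ell=4$ if $D\equiv1\bmod4$ and $\ell=1$ otherwise. Then for $\operatorname{Re}s>0$, \[ Z_D^{\mathrm{odd}}(s)=\frac14\sum_{n\ge1}\frac{r_1(n)\,r_1(Dn-\ell)}{n^{s/2}},\qquad Z_D^{\mathrm{even}}(s)=\frac14\sum_{n\ge1}\frac{r_1(n)\,r_1(Dn+\ell)}{n^{s/2}}. \]
   Context: $r_1(n)=\#\{x\in\mathbb{Z}:x^2=n\}$ (so $r_1(n)=0$ for negative $n$). $\mathcal{O}_D$ is the ring of integers of $\mathbb{Q}(\sqrt D)\subset\mathbb{R}$, $\varepsilon>1$ its fundamental unit, $\overline{\varepsilon}$ its conjugate, $N$ the norm. $q=D$ if $D\equiv1\bmod4$, else $q=4D$. $F_D(n)=(\varepsilon^n-\overline{\varepsilon}^{\,n})/\sqrt q$. $Z_D^{\mathrm{odd}}(s)=\sum_{n\ge1}F_D(2n-1)^{-s}$ and $Z_D^{\mathrm{even}}(s)=\sum_{n\ge1}F_D(2n)^{-s}$. *)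

theory Defs
  imports "HOL-Analysis.Analysis" "HOL-Computational_Algebra.Squarefree"
begin

definition r1 :: "int \<Rightarrow> nat" where
  "r1 n = card {x::int. x ^ 2 = n}"

text \<open>Elements of the ring of integers O_D of Q(sqrt D), viewed as real numbers:
  (a + b sqrt D)/2 with a, b integers, a = b mod 2 if D = 1 mod 4, a, b even otherwise.\<close>
definition in_OD :: "int \<Rightarrow> real \<Rightarrow> bool" where
  "in_OD D x \<longleftrightarrow> (\<exists>a b :: int. x = (of_int a + of_int b * sqrt (of_int D)) / 2 \<and>
      (if D mod 4 = 1 then a mod 2 = b mod 2 else even a \<and> even b))"

definition qconj :: "int \<Rightarrow> real \<Rightarrow> real" where
  "qconj D x = (THE y. \<exists>a b :: rat. x = of_rat a + of_rat b * sqrt (of_int D) \<and>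
                                    y = of_rat a - of_rat b * sqrt (of_int D))"

definition qnorm :: "int \<Rightarrow> real \<Rightarrow> real" where
  "qnorm D x = x * qconj D x"

definition unit_OD :: "int \<Rightarrow> real \<Rightarrow> bool" where
  "unit_OD D x \<longleftrightarrow> in_OD D x \<and> in_OD D (inverse x) \<and> x \<noteq> 0"

definition fund_unit :: "int \<Rightarrow> real" where
  "fund_unit D = (LEAST x. unit_OD D x \<and> x > 1)"

definition qD :: "int \<Rightarrow> int" where
  "qD D = (if D mod 4 = 1 then D else 4 * D)"

definition F_D :: "int \<Rightarrow> nat \<Rightarrow> real" where
  "F_D D n = (fund_unit D ^ n - qconj D (fund_unit D) ^ n) / sqrt (of_int (qD D))"

definition Z_odd :: "int \<Rightarrow> complex \<Rightarrow> complex" where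
  "Z_odd D s = (\<Sum>n. complex_of_real (F_D D (2 * Suc n - 1)) powr (- s))"

definition Z_even :: "int \<Rightarrow> complex \<Rightarrow> complex" where
  "Z_even D s = (\<Sum>n. complex_of_real (F_D D (2 * Suc n)) powr (- s))"

end

theory Submission
  imports Defs
begin

text \<open>
  The units of O_D greater than 1 are exactly the powers \<epsilon>^m, of norm (-1)^m. Writing
  \<epsilon>^m = (a + b sqrt D) / 2, one finds F_D(m) = b / c with c = 1 or 2 (so that sqrt q = c sqrt D),
  and the norm equation a^2 - D b^2 = 4 (-1)^m becomes y^2 - D x^2 = (-1)^m \<ell> for x = F_D(m).
  Hence F_D maps the odd (even) m bijectively onto the positive x for which D x^2 - \<ell>
  (D x^2 + \<ell>) is a nonzero square, and each such x contributes r_1(x^2) r_1(D x^2 \<mp> \<ell>) = 4 at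
  n = x^2. Convergence comes from F_D(m) growing like \<epsilon>^m. The existence of \<epsilon> rests on a
  nontrivial solution of Pell's equation, obtained from Dirichlet's approximation theorem.
\<close>

lemma sqrt_of_int_notin_Rats:
  fixes D :: int
  assumes "D > 1" and "squarefree D"
  shows "sqrt (real_of_int D) \<notin> \<rat>"
proof
  assume "sqrt (real_of_int D) \<in> \<rat>"
  then obtain m n :: nat where n: "n \<noteq> 0" and frac: "\<bar>sqrt (real_of_int D)\<bar> = real m / real n"
    and "coprime m n" by (rule Rats_abs_nat_div_natE)
  have "sqrt (real_of_int D) * real n = real m" using frac n \<open>D > 1\<close> by (simp add: field_simps)
  then have "(sqrt (real_of_int D) * real n) ^ 2 = real m ^ 2" by simp
  then have "real_of_int D * real n ^ 2 = real m ^ 2" using \<open>D > 1\<close> by (simp add: power_mult_distrib)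
  then have sq: "D * int n ^ 2 = int m ^ 2" by (metis of_int_eq_iff of_int_mult of_int_of_nat_eq of_int_power)
  then have "n ^ 2 dvd m ^ 2" by (metis dvd_triv_right of_nat_dvd_iff of_nat_power)
  then have "n dvd m" by simp
  with \<open>coprime m n\<close> have "n = 1" by (metis coprime_common_divisor_nat dvd_refl nat_dvd_1_iff_1)
  with sq have "D = int m ^ 2" by simp
  with \<open>squarefree D\<close> \<open>D > 1\<close> show False using squarefree_power_iff[of "int m" 2] by auto
qed

lemma r1_power2: "x \<noteq> 0 \<Longrightarrow> r1 (x ^ 2) = 2"
proof -
  assume "x \<noteq> 0"
  have "{z::int. z ^ 2 = x ^ 2} = {x, -x}" by (auto simp: power2_eq_iff)
  with \<open>x \<noteq> 0\<close> show ?thesis unfolding r1_def by simp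
qed

lemma r1_neq_0_imp_square: "r1 n \<noteq> 0 \<Longrightarrow> \<exists>x. x ^ 2 = n"
  unfolding r1_def by (metis (mono_tags) card.empty empty_Collect_eq)

lemma neg_one_power_eq_imp_progression:
  fixes m j :: nat
  assumes "(-1 :: int) ^ m = (-1) ^ j" and "m \<ge> 1" and "j = 1 \<or> j = 2"
  shows "\<exists>k. m = 2 * k + j"
proof -
  have "even m \<longleftrightarrow> even j" using assms(1) by (auto simp: minus_one_power_iff split: if_splits)
  with assms(2,3) show ?thesis by presburger
qed

lemma of_real_power2_powr_half:
  assumes "x > 0"
  shows "complex_of_real (x ^ 2) powr (s / 2) = complex_of_real x powr s"
proof -
  have "Ln (complex_of_real (x ^ 2)) = complex_of_real (2 * ln x)"
    using assms by (subst Ln_of_real) (auto simp: ln_realpow)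
  also have "\<dots> = 2 * Ln (complex_of_real x)" using assms by (simp add: Ln_of_real)
  finally show ?thesis using assms by (simp add: powr_def)
qed

text \<open>Composing the solution (h1, k1) of x^2 - D y^2 = m with the conjugate of (h2, k2) gives a
  solution of norm m^2, and the congruences make it divisible by m.\<close>
lemma pell_from_congruent_solutions:
  fixes D h1 k1 h2 k2 m :: int
  assumes m1: "m = h1\<^sup>2 - D * k1\<^sup>2" and m2: "m = h2\<^sup>2 - D * k2\<^sup>2" and "m \<noteq> 0"
    and "h2 mod m = h1 mod m" "k2 mod m = k1 mod m"
    and "h1 > 0" "h2 > 0" "(h1, k1) \<noteq> (h2, k2)"
  shows "\<exists>X Y. X\<^sup>2 - D * Y\<^sup>2 = 1 \<and> Y \<noteq> 0"
proof -
  obtain s t where s: "h2 = h1 + m * s" and t: "k2 = k1 + m * t"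
    using assms(4,5) by (metis mod_eq_dvd_iff dvdE add_diff_cancel_left' diff_add_cancel)
  define X Y where "X = 1 + h1 * s - D * k1 * t" and "Y = k1 * s - h1 * t"
  have X: "h1 * h2 - D * k1 * k2 = m * X" and Y: "k1 * h2 - h1 * k2 = m * Y"
    unfolding X_def Y_def s t m1 by (simp_all add: algebra_simps power2_eq_square)
  have "(h1 * h2 - D * k1 * k2)\<^sup>2 - D * (k1 * h2 - h1 * k2)\<^sup>2 = (h1\<^sup>2 - D * k1\<^sup>2) * (h2\<^sup>2 - D * k2\<^sup>2)"
    by (simp add: algebra_simps power2_eq_square)
  then have "m\<^sup>2 * (X\<^sup>2 - D * Y\<^sup>2) = m\<^sup>2 * 1"
    unfolding X Y m1[symmetric] m2[symmetric] by (simp add: algebra_simps power2_eq_square)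
  then have "X\<^sup>2 - D * Y\<^sup>2 = 1" using \<open>m \<noteq> 0\<close> by simp
  moreover have "Y \<noteq> 0"
  proof
    assume "Y = 0"
    then have kh: "k1 * h2 = h1 * k2" using Y by simp
    have "h1\<^sup>2 * (h2\<^sup>2 - D * k2\<^sup>2) - h2\<^sup>2 * (h1\<^sup>2 - D * k1\<^sup>2) = D * ((k1 * h2)\<^sup>2 - (h1 * k2)\<^sup>2)"
      by (simp add: algebra_simps power2_eq_square)
    then have "h1\<^sup>2 * m = h2\<^sup>2 * m" using kh m1 m2 by simp
    then have "h1 = h2" using \<open>m \<noteq> 0\<close> \<open>h1 > 0\<close> \<open>h2 > 0\<close> by (simp add: power2_eq_iff)
    with kh \<open>h1 > 0\<close> \<open>(h1, k1) \<noteq> (h2, k2)\<close> show False by simp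
  qed
  ultimately show ?thesis by blast
qed

section \<open>The order O_D\<close>

locale real_quadratic =
  fixes D :: int
  assumes D_gt_1: "D > 1" and sqrt_D_irrational: "sqrt (real_of_int D) \<notin> \<rat>"
begin

abbreviation sqrtD :: real where "sqrtD \<equiv> sqrt (real_of_int D)"

lemma sqrtD_square: "sqrtD * sqrtD = real_of_int D"
  using D_gt_1 by simp

lemma sqrtD_gt_1: "sqrtD > 1"
  using D_gt_1 by simp

lemma rat_sqrtD_eq_iff:
  "of_rat p + of_rat q * sqrtD = of_rat p' + of_rat q' * sqrtD \<longleftrightarrow> p = p' \<and> q = q'"
proof
  assume eq: "of_rat p + of_rat q * sqrtD = of_rat p' + of_rat q' * sqrtD"
  show "p = p' \<and> q = q'"
  proof (cases "q = q'")
    case False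
    with eq have "sqrtD = of_rat ((p - p') / (q' - q))"
      by (simp add: of_rat_divide of_rat_diff field_simps)
    with sqrt_D_irrational show ?thesis by (metis Rats_of_rat)
  qed (use eq in simp)
qed simp

lemma qconj_rat: "qconj D (of_rat p + of_rat q * sqrtD) = of_rat p - of_rat q * sqrtD"
  unfolding qconj_def by (rule the_equality) (auto simp: rat_sqrtD_eq_iff)

lemma half_int_eq_rat:
  "(of_int a + of_int b * sqrtD) / 2 = of_rat (of_int a / 2) + of_rat (of_int b / 2) * sqrtD"
  "(of_int a - of_int b * sqrtD) / 2 = of_rat (of_int a / 2) - of_rat (of_int b / 2) * sqrtD"
  by (simp_all add: of_rat_divide field_simps)

lemma qconj_half_int: "qconj D ((of_int a + of_int b * sqrtD) / 2) = (of_int a - of_int b * sqrtD) / 2"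
  unfolding half_int_eq_rat by (rule qconj_rat)

lemma qnorm_half_int: "qnorm D ((of_int a + of_int b * sqrtD) / 2) = of_int (a\<^sup>2 - D * b\<^sup>2) / 4"
  unfolding qnorm_def qconj_half_int using sqrtD_square
  by (simp add: field_simps power2_eq_square)

lemma qconj_mult_rat:
  "qconj D ((of_rat p + of_rat q * sqrtD) * (of_rat p' + of_rat q' * sqrtD)) =
   qconj D (of_rat p + of_rat q * sqrtD) * qconj D (of_rat p' + of_rat q' * sqrtD)"
proof -
  have "(of_rat p + of_rat q * sqrtD) * (of_rat p' + of_rat q' * sqrtD) =
        of_rat (p * p' + of_int D * q * q') + of_rat (p * q' + q * p') * sqrtD"
   and "(of_rat p - of_rat q * sqrtD) * (of_rat p' - of_rat q' * sqrtD) =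
        of_rat (p * p' + of_int D * q * q') - of_rat (p * q' + q * p') * sqrtD"
    using sqrtD_square by (simp_all add: of_rat_add of_rat_mult algebra_simps)
  then show ?thesis by (simp add: qconj_rat)
qed

definition OD_parity :: "int \<Rightarrow> int \<Rightarrow> bool" where
  "OD_parity a b \<longleftrightarrow> (if D mod 4 = 1 then a mod 2 = b mod 2 else even a \<and> even b)"

lemma in_OD_iff: "in_OD D x \<longleftrightarrow> (\<exists>a b. x = (of_int a + of_int b * sqrtD) / 2 \<and> OD_parity a b)"
  unfolding in_OD_def OD_parity_def by blast

lemma in_ODE:
  assumes "in_OD D x"
  obtains a b where "x = (of_int a + of_int b * sqrtD) / 2" "OD_parity a b"
  using assms in_OD_iff by blast

lemma in_OD_imp_rat: "in_OD D x \<Longrightarrow> \<exists>p q. x = of_rat p + of_rat q * sqrtD"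
  by (metis in_ODE half_int_eq_rat(1))

lemma OD_parity_mult:
  assumes "OD_parity a b" "OD_parity c d"
  shows "OD_parity ((a * c + D * b * d) div 2) ((a * d + b * c) div 2)
    \<and> even (a * c + D * b * d) \<and> even (a * d + b * c)"
proof (cases "D mod 4 = 1")
  case True
  then obtain j where j: "D = 4 * j + 1" by (metis div_mult_mod_eq add.commute mult.commute)
  obtain e f where e: "a = b + 2 * e" and f: "c = d + 2 * f"
    using assms True unfolding OD_parity_def by (metis add.commute mod_eq_dvd_iff dvd_def eq_diff_eq)
  have "a * c + D * b * d = 2 * (b * d + b * f + e * d + 2 * e * f + 2 * j * b * d)"
   and "a * d + b * c = 2 * (b * d + e * d + b * f)"
    unfolding e f j by (simp_all add: algebra_simps)
  then show ?thesis using True unfolding OD_parity_def by simp presburger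
next
  case False
  then obtain a' b' c' d' where "a = 2 * a'" "b = 2 * b'" "c = 2 * c'" "d = 2 * d'"
    using assms unfolding OD_parity_def by (auto elim!: evenE)
  then show ?thesis using False unfolding OD_parity_def by simp
qed

lemma OD_parity_norm_dvd:
  assumes "OD_parity a b"
  shows "4 dvd a\<^sup>2 - D * b\<^sup>2"
proof (cases "D mod 4 = 1")
  case True
  then obtain j where j: "D = 4 * j + 1" by (metis div_mult_mod_eq add.commute mult.commute)
  obtain e where e: "a = b + 2 * e"
    using assms True unfolding OD_parity_def by (metis add.commute mod_eq_dvd_iff dvd_def eq_diff_eq)
  have "a\<^sup>2 - D * b\<^sup>2 = 4 * (b * e + e * e - j * b * b)"
    unfolding e j by (simp add: algebra_simps power2_eq_square)
  then show ?thesis by simp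
next
  case False
  then obtain a' b' where "a = 2 * a'" "b = 2 * b'"
    using assms unfolding OD_parity_def by (auto elim!: evenE)
  then show ?thesis by (simp add: power_mult_distrib)
qed

lemma in_OD_mult: "in_OD D x \<Longrightarrow> in_OD D y \<Longrightarrow> in_OD D (x * y)"
proof -
  assume "in_OD D x" "in_OD D y"
  then obtain a b c d where x: "x = (of_int a + of_int b * sqrtD) / 2" and "OD_parity a b"
    and y: "y = (of_int c + of_int d * sqrtD) / 2" and "OD_parity c d" by (metis in_ODE)
  define A B where "A = a * c + D * b * d" and "B = a * d + b * c"
  have parity: "OD_parity (A div 2) (B div 2)" "even A" "even B"
    using OD_parity_mult[OF \<open>OD_parity a b\<close> \<open>OD_parity c d\<close>] unfolding A_def B_def by auto
  have "x * y = (of_int A + of_int B * sqrtD) / 4"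
    unfolding x y A_def B_def using sqrtD_square by (simp add: algebra_simps)
  also have "\<dots> = (of_int (A div 2) + of_int (B div 2) * sqrtD) / 2"
    using parity(2,3) by (auto elim!: evenE simp: field_simps)
  finally show ?thesis using parity(1) in_OD_iff by blast
qed

lemma in_OD_one: "in_OD D 1"
proof -
  have "(1::real) = (of_int 2 + of_int 0 * sqrtD) / 2" "OD_parity 2 0"
    by (simp_all add: OD_parity_def)
  then show ?thesis unfolding in_OD_iff by blast
qed

lemma in_OD_power: "in_OD D x \<Longrightarrow> in_OD D (x ^ n)"
  by (induction n) (auto simp: in_OD_one in_OD_mult)

lemma in_OD_qconj: "in_OD D x \<Longrightarrow> in_OD D (qconj D x)"
proof (elim in_ODE)
  fix a b assume x: "x = (of_int a + of_int b * sqrtD) / 2" and "OD_parity a b"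
  have "qconj D x = (of_int a + of_int (- b) * sqrtD) / 2"
    unfolding x qconj_half_int by simp
  moreover have "OD_parity a (- b)"
    using \<open>OD_parity a b\<close> unfolding OD_parity_def by (auto; presburger)
  ultimately show ?thesis unfolding in_OD_iff by blast
qed

lemma in_OD_uminus: "in_OD D x \<Longrightarrow> in_OD D (- x)"
proof (elim in_ODE)
  fix a b assume x: "x = (of_int a + of_int b * sqrtD) / 2" and "OD_parity a b"
  have "- x = (of_int (- a) + of_int (- b) * sqrtD) / 2"
    unfolding x by (simp add: field_simps)
  moreover have "OD_parity (- a) (- b)"
    using \<open>OD_parity a b\<close> unfolding OD_parity_def by (auto; presburger)
  ultimately show ?thesis unfolding in_OD_iff by blast
qed

lemma qconj_mult: "in_OD D x \<Longrightarrow> in_OD D y \<Longrightarrow> qconj D (x * y) = qconj D x * qconj D y"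
  using in_OD_imp_rat qconj_mult_rat by metis

lemma qconj_one: "qconj D 1 = 1"
  using qconj_half_int[of 2 0] by simp

lemma qconj_power: "in_OD D x \<Longrightarrow> qconj D (x ^ n) = qconj D x ^ n"
  by (induction n) (auto simp: qconj_one qconj_mult in_OD_power)

lemma qnorm_mult: "in_OD D x \<Longrightarrow> in_OD D y \<Longrightarrow> qnorm D (x * y) = qnorm D x * qnorm D y"
  unfolding qnorm_def by (simp add: qconj_mult)

lemma qnorm_power: "in_OD D x \<Longrightarrow> qnorm D (x ^ n) = qnorm D x ^ n"
  unfolding qnorm_def by (simp add: qconj_power power_mult_distrib)

lemma qnorm_in_Ints: "in_OD D x \<Longrightarrow> qnorm D x \<in> \<int>"
proof (elim in_ODE)
  fix a b assume x: "x = (of_int a + of_int b * sqrtD) / 2" and "OD_parity a b"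
  then obtain k where "a\<^sup>2 - D * b\<^sup>2 = 4 * k" using OD_parity_norm_dvd by blast
  then show "qnorm D x \<in> \<int>" unfolding x qnorm_half_int by simp
qed

lemma unit_OD_iff_qnorm: "unit_OD D x \<longleftrightarrow> in_OD D x \<and> (qnorm D x = 1 \<or> qnorm D x = -1)"
proof
  assume "unit_OD D x"
  then have x: "in_OD D x" and x_inv: "in_OD D (inverse x)" and "x \<noteq> 0"
    unfolding unit_OD_def by auto
  have "qnorm D x * qnorm D (inverse x) = 1"
    using qnorm_mult[OF x x_inv] \<open>x \<noteq> 0\<close> by (simp add: qnorm_def qconj_one)
  moreover obtain N N' where "qnorm D x = of_int N" "qnorm D (inverse x) = of_int N'"
    using qnorm_in_Ints[OF x] qnorm_in_Ints[OF x_inv] by (auto elim!: Ints_cases)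
  ultimately have "N * N' = 1" by (metis of_int_eq_1_iff of_int_mult)
  with x \<open>qnorm D x = of_int N\<close> show "in_OD D x \<and> (qnorm D x = 1 \<or> qnorm D x = -1)"
    using zmult_eq_1_iff by fastforce
next
  assume unit: "in_OD D x \<and> (qnorm D x = 1 \<or> qnorm D x = -1)"
  then have x: "in_OD D x" and N: "qnorm D x * qnorm D x = 1" by auto
  then have "x \<noteq> 0" by (auto simp: qnorm_def)
  have "x * (qnorm D x * qconj D x) = 1" using N by (simp add: qnorm_def mult_ac)
  then have "inverse x = qnorm D x * qconj D x" by (metis inverse_unique)
  moreover have "in_OD D (qnorm D x * qconj D x)"
    using unit in_OD_qconj[OF x] in_OD_uminus[OF in_OD_qconj[OF x]] by auto
  ultimately show "unit_OD D x" unfolding unit_OD_def using x \<open>x \<noteq> 0\<close> by simp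
qed

lemma unit_OD_one: "unit_OD D 1"
  unfolding unit_OD_def by (simp add: in_OD_one)

lemma unit_OD_mult: "unit_OD D x \<Longrightarrow> unit_OD D y \<Longrightarrow> unit_OD D (x * y)"
  unfolding unit_OD_def by (auto simp: in_OD_mult)

lemma unit_OD_inverse: "unit_OD D x \<Longrightarrow> unit_OD D (inverse x)"
  unfolding unit_OD_def by auto

lemma unit_OD_power: "unit_OD D x \<Longrightarrow> unit_OD D (x ^ n)"
  by (induction n) (auto simp: unit_OD_one unit_OD_mult)

lemma unit_OD_gt_1_coords:
  assumes "unit_OD D u" and "u > 1"
  obtains a b where "u = (of_int a + of_int b * sqrtD) / 2" "OD_parity a b" "a \<ge> 1" "b \<ge> 1"
proof -
  obtain a b where u: "u = (of_int a + of_int b * sqrtD) / 2" and "OD_parity a b"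
    using assms(1) unit_OD_iff_qnorm in_ODE by metis
  have "u * qconj D u = 1 \<or> u * qconj D u = -1"
    using assms(1) unfolding unit_OD_iff_qnorm qnorm_def by blast
  then have "qconj D u = 1 / u \<or> qconj D u = - 1 / u" using \<open>u > 1\<close> by (auto simp: field_simps)
  then have "\<bar>qconj D u\<bar> < 1" using \<open>u > 1\<close> by auto
  moreover have "of_int a = u + qconj D u" and "of_int b * sqrtD = u - qconj D u"
    unfolding u qconj_half_int by (simp_all add: field_simps)
  ultimately have "real_of_int a > 0" "real_of_int b * sqrtD > 0" using \<open>u > 1\<close> by linarith+
  then have "a \<ge> 1" "b \<ge> 1" using sqrtD_gt_1 by (simp_all add: zero_less_mult_iff)
  with u \<open>OD_parity a b\<close> that show ?thesis by blast
qed

section \<open>Pell's equation and the fundamental unit\<close>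

lemma infinite_sqrtD_approximants:
  "infinite {(h, k). k > 0 \<and> \<bar>of_int k * sqrtD - of_int h\<bar> < 1 / of_int k}" (is "infinite ?B")
proof
  assume "finite ?B"
  define err where "err = (\<lambda>(h, k). \<bar>of_int k * sqrtD - of_int h\<bar>)"
  have approx: "\<exists>p\<in>?B. err p < 1 / real N" if "N > 0" for N :: nat
  proof -
    obtain h k where k: "0 < k" "k \<le> int N" and close: "\<bar>of_int k * sqrtD - of_int h\<bar> < 1 / N"
      using Dirichlet_approx[OF \<open>N > 0\<close>] by blast
    have "1 / real N \<le> 1 / of_int k" using k by (simp add: frac_le)
    with close k show ?thesis unfolding err_def by (intro bexI[of _ "(h, k)"]) auto
  qed
  have err_pos: "err p > 0" if "p \<in> ?B" for p
  proof (rule ccontr)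
    obtain h k where p: "p = (h, k)" and "k > 0" using \<open>p \<in> ?B\<close> by auto
    assume "\<not> err p > 0"
    then have "sqrtD = of_int h / of_int k" using \<open>k > 0\<close> unfolding p err_def by (simp add: field_simps)
    with sqrt_D_irrational show False by simp
  qed
  define \<delta> where "\<delta> = Min (err ` ?B)"
  have "?B \<noteq> {}" using approx[of 1] by auto
  then have "\<delta> > 0" using \<open>finite ?B\<close> err_pos unfolding \<delta>_def by simp
  then obtain N :: nat where N: "inverse (real (Suc N)) < \<delta>" using reals_Archimedean by blast
  obtain p where "p \<in> ?B" "err p < 1 / real (Suc N)" using approx[of "Suc N"] by auto
  moreover have "\<delta> \<le> err p" using \<open>p \<in> ?B\<close> \<open>finite ?B\<close> unfolding \<delta>_def by simp
  ultimately show False using N by (simp add: inverse_eq_divide)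
qed

lemma sqrtD_approximant_norm:
  assumes k: "k > 0" and close: "\<bar>of_int k * sqrtD - of_int h\<bar> < 1 / of_int k"
  shows "h > 0 \<and> h\<^sup>2 - D * k\<^sup>2 \<noteq> 0 \<and> \<bar>h\<^sup>2 - D * k\<^sup>2\<bar> \<le> 2 * sqrtD + 1"
proof -
  have k1: "real_of_int k \<ge> 1" using k by simp
  then have "1 / real_of_int k \<le> 1" "of_int k * sqrtD \<ge> sqrtD" using sqrtD_gt_1 by simp_all
  then have "real_of_int h > 0" using close sqrtD_gt_1 by linarith
  have norm: "real_of_int (h\<^sup>2 - D * k\<^sup>2) = (of_int h - of_int k * sqrtD) * (of_int h + of_int k * sqrtD)"
    using sqrtD_square by (simp add: algebra_simps power2_eq_square)
  have "of_int h - of_int k * sqrtD \<noteq> 0"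
  proof
    assume "of_int h - of_int k * sqrtD = 0"
    then have "sqrtD = of_int h / of_int k" using k by (simp add: field_simps)
    with sqrt_D_irrational show False by simp
  qed
  moreover have "of_int h + of_int k * sqrtD > 0" using \<open>real_of_int h > 0\<close> k D_gt_1 by (simp add: add_pos_pos)
  ultimately have "h\<^sup>2 - D * k\<^sup>2 \<noteq> 0" using norm by (metis of_int_0 mult_eq_0_iff less_irrefl)
  have diff: "\<bar>of_int h - of_int k * sqrtD\<bar> < 1 / of_int k" using close by (simp add: abs_minus_commute)
  have "\<bar>of_int h + of_int k * sqrtD\<bar> \<le> \<bar>of_int h - of_int k * sqrtD\<bar> + \<bar>2 * of_int k * sqrtD\<bar>"
    by (rule order.trans[OF _ abs_triangle_ineq]) simp
  then have sum: "\<bar>of_int h + of_int k * sqrtD\<bar> \<le> 1 / of_int k + 2 * of_int k * sqrtD"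
    using diff k sqrtD_gt_1 by simp
  have "\<bar>real_of_int (h\<^sup>2 - D * k\<^sup>2)\<bar> \<le> (1 / of_int k) * (1 / of_int k + 2 * of_int k * sqrtD)"
    unfolding norm abs_mult by (rule mult_mono) (use diff sum k in auto)
  also have "\<dots> = 1 / (of_int k)\<^sup>2 + 2 * sqrtD" using k by (simp add: field_simps power2_eq_square)
  also have "\<dots> \<le> 1 + 2 * sqrtD" using k1 by (simp add: power_le_one_iff field_simps)
  finally show ?thesis using \<open>real_of_int h > 0\<close> \<open>h\<^sup>2 - D * k\<^sup>2 \<noteq> 0\<close> by simp
qed

text \<open>Pigeonhole: infinitely many approximants share the norm m and their residues modulo m.\<close>
lemma pell_nontrivial_solution: "\<exists>X Y. X\<^sup>2 - D * Y\<^sup>2 = 1 \<and> Y \<noteq> 0"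
proof -
  define B where "B = {(h, k). k > 0 \<and> \<bar>of_int k * sqrtD - of_int h\<bar> < 1 / of_int k}"
  define norm where "norm = (\<lambda>(h, k). h\<^sup>2 - D * k\<^sup>2)"
  have B_norm: "fst p > 0 \<and> norm p \<noteq> 0 \<and> \<bar>norm p\<bar> \<le> 2 * sqrtD + 1" if "p \<in> B" for p
  proof -
    obtain h k where p: "p = (h, k)" by (cases p)
    show ?thesis using that sqrtD_approximant_norm[of k h] unfolding p B_def norm_def by simp
  qed
  define M where "M = \<lceil>2 * sqrtD + 1\<rceil>"
  define residues where "residues = (\<lambda>p. (norm p, fst p mod norm p, snd p mod norm p))"
  have "residues ` B \<subseteq> {-M..M} \<times> {-M..M} \<times> {-M..M}"
  proof
    fix z assume "z \<in> residues ` B"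
    then obtain p where "p \<in> B" and z: "z = residues p" by blast
    have "real_of_int \<bar>norm p\<bar> \<le> of_int M"
      using B_norm[OF \<open>p \<in> B\<close>] le_of_int_ceiling order_trans unfolding M_def by blast
    then have "\<bar>norm p\<bar> \<le> M" by linarith
    moreover have "\<bar>fst p mod norm p\<bar> < \<bar>norm p\<bar>" "\<bar>snd p mod norm p\<bar> < \<bar>norm p\<bar>"
      using B_norm[OF \<open>p \<in> B\<close>] abs_mod_less by auto
    ultimately show "z \<in> {-M..M} \<times> {-M..M} \<times> {-M..M}" unfolding z residues_def by auto
  qed
  then have "finite (residues ` B)" by (rule finite_subset) simp
  moreover have "infinite B" using infinite_sqrtD_approximants unfolding B_def .
  ultimately obtain p1 where "p1 \<in> B" and "infinite {p \<in> B. residues p = residues p1}"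
    using pigeonhole_infinite by blast
  then have "{p \<in> B. residues p = residues p1} - {p1} \<noteq> {}"
    by (metis finite.emptyI finite.insertI finite_Diff2)
  then obtain p2 where "p2 \<in> B" "residues p2 = residues p1" "p2 \<noteq> p1" by blast
  obtain h1 k1 h2 k2 where p: "p1 = (h1, k1)" "p2 = (h2, k2)" by (cases p1, cases p2)
  show ?thesis
  proof (rule pell_from_congruent_solutions)
    show "norm p1 = h1\<^sup>2 - D * k1\<^sup>2" "norm p1 = h2\<^sup>2 - D * k2\<^sup>2"
      "h2 mod norm p1 = h1 mod norm p1" "k2 mod norm p1 = k1 mod norm p1"
      using \<open>residues p2 = residues p1\<close> unfolding residues_def norm_def p by auto
    show "norm p1 \<noteq> 0" "h1 > 0" "h2 > 0"
      using B_norm[OF \<open>p1 \<in> B\<close>] B_norm[OF \<open>p2 \<in> B\<close>] unfolding p by auto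
    show "(h1, k1) \<noteq> (h2, k2)" using \<open>p2 \<noteq> p1\<close> unfolding p by auto
  qed
qed

lemma exists_unit_OD_gt_1: "\<exists>u. unit_OD D u \<and> u > 1"
proof -
  obtain X Y where XY: "X\<^sup>2 - D * Y\<^sup>2 = 1" and "Y \<noteq> 0" using pell_nontrivial_solution by blast
  define u where "u = (of_int (2 * \<bar>X\<bar>) + of_int (2 * \<bar>Y\<bar>) * sqrtD) / 2"
  have "OD_parity (2 * \<bar>X\<bar>) (2 * \<bar>Y\<bar>)" by (simp add: OD_parity_def)
  then have "in_OD D u" unfolding u_def in_OD_iff by blast
  moreover have "qnorm D u = of_int (4 * (X\<^sup>2 - D * Y\<^sup>2)) / 4"
    unfolding u_def qnorm_half_int by (simp add: power_mult_distrib algebra_simps)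
  then have "qnorm D u = 1" using XY by simp
  moreover have "u > 1"
  proof -
    have "\<bar>real_of_int Y\<bar> * sqrtD \<ge> 1 * sqrtD" using \<open>Y \<noteq> 0\<close> sqrtD_gt_1
      by (intro mult_right_mono) auto
    moreover have "u = \<bar>real_of_int X\<bar> + \<bar>real_of_int Y\<bar> * sqrtD" unfolding u_def by simp
    ultimately show ?thesis using sqrtD_gt_1 abs_ge_zero[of "real_of_int X"] by linarith
  qed
  ultimately show ?thesis unfolding unit_OD_iff_qnorm by blast
qed

lemma finite_units_OD_between: "finite {u. unit_OD D u \<and> 1 < u \<and> u \<le> c}"
proof -
  define K where "K = \<lceil>2 * c\<rceil>"
  have "{u. unit_OD D u \<and> 1 < u \<and> u \<le> c} \<subseteq> (\<lambda>(a, b). (of_int a + of_int b * sqrtD) / 2) ` ({1..K} \<times> {1..K})"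
  proof
    fix u assume "u \<in> {u. unit_OD D u \<and> 1 < u \<and> u \<le> c}"
    then have u: "unit_OD D u" "u > 1" "u \<le> c" by auto
    then obtain a b where ab: "u = (of_int a + of_int b * sqrtD) / 2" "a \<ge> 1" "b \<ge> 1"
      by (metis unit_OD_gt_1_coords)
    have "real_of_int b \<le> of_int b * sqrtD" "0 \<le> of_int b * sqrtD"
      using ab(3) sqrtD_gt_1 by simp_all
    moreover have "of_int a + of_int b * sqrtD \<le> 2 * c" using ab(1) u(3) by simp
    ultimately have "real_of_int a \<le> 2 * c" "real_of_int b \<le> 2 * c" using ab(2) by linarith+
    then have "a \<le> K" "b \<le> K" unfolding K_def by linarith+
    with ab show "u \<in> (\<lambda>(a, b). (of_int a + of_int b * sqrtD) / 2) ` ({1..K} \<times> {1..K})" by force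
  qed
  then show ?thesis by (rule finite_subset) simp
qed

lemma fund_unit_least:
  "unit_OD D (fund_unit D) \<and> fund_unit D > 1 \<and> (\<forall>v. unit_OD D v \<and> v > 1 \<longrightarrow> fund_unit D \<le> v)"
proof -
  obtain u0 where "unit_OD D u0" "u0 > 1" using exists_unit_OD_gt_1 by blast
  define T where "T = {u. unit_OD D u \<and> 1 < u \<and> u \<le> u0}"
  have "finite T" "u0 \<in> T"
    using finite_units_OD_between \<open>unit_OD D u0\<close> \<open>u0 > 1\<close> unfolding T_def by auto
  then have "Min T \<in> T" by (metis Min_in empty_iff)
  have Min_least: "\<forall>v. unit_OD D v \<and> v > 1 \<longrightarrow> Min T \<le> v"
  proof (intro allI impI)
    fix v assume v: "unit_OD D v \<and> v > 1"
    show "Min T \<le> v"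
    proof (cases "v \<le> u0")
      case True
      then show ?thesis using v \<open>finite T\<close> unfolding T_def by simp
    next
      case False
      moreover have "Min T \<le> u0" using \<open>finite T\<close> \<open>u0 \<in> T\<close> by simp
      ultimately show ?thesis by simp
    qed
  qed
  have "fund_unit D = Min T"
    unfolding fund_unit_def by (rule Least_equality) (use \<open>Min T \<in> T\<close> Min_least T_def in auto)
  then show ?thesis using \<open>Min T \<in> T\<close> Min_least unfolding T_def by auto
qed

lemma unit_OD_gt_1_eq_fund_unit_power:
  assumes "unit_OD D u" and "u > 1"
  shows "\<exists>n\<ge>1. u = fund_unit D ^ n"
proof -
  define e where "e = fund_unit D"
  have e: "unit_OD D e" "e > 1" and e_least: "\<And>v. unit_OD D v \<Longrightarrow> v > 1 \<Longrightarrow> e \<le> v"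
    using fund_unit_least unfolding e_def by auto
  obtain N where "u < e ^ N" using real_arch_pow[OF \<open>e > 1\<close>] by blast
  define n0 where "n0 = (LEAST n. u < e ^ n)"
  have "u < e ^ n0" unfolding n0_def by (rule LeastI[of _ N]) fact
  then obtain n where n: "n0 = Suc n" using \<open>u > 1\<close> by (cases n0) auto
  have "e ^ n \<le> u" using not_less_Least[of n "\<lambda>n. u < e ^ n"] n unfolding n0_def by auto
  have "u < e ^ n * e" using \<open>u < e ^ n0\<close> n by (simp add: mult.commute)
  define v where "v = u * inverse e ^ n"
  have "e ^ n > 0" using \<open>e > 1\<close> by simp
  have "unit_OD D v"
    unfolding v_def using assms(1) unit_OD_mult unit_OD_power unit_OD_inverse e(1) by blast
  moreover have "1 \<le> v" "v < e"
    using \<open>e ^ n \<le> u\<close> \<open>u < e ^ n * e\<close> \<open>e ^ n > 0\<close> unfolding v_def by (simp_all add: power_inverse field_simps)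
  ultimately have "v = 1" using e_least[of v] by fastforce
  then have "u = e ^ n" unfolding v_def using \<open>e ^ n > 0\<close> by (simp add: power_inverse field_simps)
  moreover have "n \<ge> 1" using \<open>u = e ^ n\<close> \<open>u > 1\<close> by (cases n) auto
  ultimately show ?thesis unfolding e_def by blast
qed

end

section \<open>F_D and the equations y^2 - D x^2 = \<plusminus>\<ell>\<close>

locale real_quadratic_negative_unit = real_quadratic +
  assumes qnorm_fund_unit: "qnorm D (fund_unit D) = -1"
begin

abbreviation \<epsilon> :: real where "\<epsilon> \<equiv> fund_unit D"

definition disc_factor :: int where "disc_factor = (if D mod 4 = 1 then 1 else 2)"

definition ell :: int where "ell = (if D mod 4 = 1 then 4 else 1)"

lemma ell_bounds: "0 < ell" "ell < D"
  using D_gt_1 unfolding ell_def by presburger+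

lemma unit_OD_fund_unit: "unit_OD D \<epsilon>" and fund_unit_gt_1: "\<epsilon> > 1"
  using fund_unit_least by auto

lemma in_OD_fund_unit: "in_OD D \<epsilon>"
  using unit_OD_fund_unit unfolding unit_OD_def by simp

lemma sqrt_qD: "sqrt (real_of_int (qD D)) = of_int disc_factor * sqrtD"
  unfolding qD_def disc_factor_def by (auto simp: real_sqrt_mult)

lemma qconj_fund_unit: "qconj D \<epsilon> = - inverse \<epsilon>"
  using qnorm_fund_unit fund_unit_gt_1 unfolding qnorm_def by (simp add: field_simps)

lemma F_D_eq: "F_D D m = (\<epsilon> ^ m - (- inverse \<epsilon>) ^ m) / (of_int disc_factor * sqrtD)"
  unfolding F_D_def qconj_fund_unit sqrt_qD ..

lemma disc_factor_sqrtD_pos: "of_int disc_factor * sqrtD > 0"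
  using D_gt_1 by (simp add: disc_factor_def)

lemma F_D_of_coords:
  assumes "\<epsilon> ^ m = (of_int a + of_int b * sqrtD) / 2"
  shows "F_D D m = of_int b / of_int disc_factor"
proof -
  have conj: "qconj D \<epsilon> ^ m = (of_int a - of_int b * sqrtD) / 2"
    using qconj_power[OF in_OD_fund_unit, of m] unfolding assms qconj_half_int by simp
  show ?thesis
    unfolding F_D_def sqrt_qD conj assms using disc_factor_sqrtD_pos D_gt_1 by (simp add: field_simps)
qed

lemma qnorm_fund_unit_power: "qnorm D (\<epsilon> ^ m) = (-1) ^ m"
  using qnorm_power[OF in_OD_fund_unit] qnorm_fund_unit by simp

lemma F_D_Pell:
  assumes "m \<ge> 1"
  shows "\<exists>x y. x > 0 \<and> y > 0 \<and> F_D D m = of_int x \<and> y\<^sup>2 - D * x\<^sup>2 = (-1) ^ m * ell"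
proof -
  have "unit_OD D (\<epsilon> ^ m)" "\<epsilon> ^ m > 1"
    using unit_OD_power[OF unit_OD_fund_unit] fund_unit_gt_1 assms by auto
  then obtain a b where ab: "\<epsilon> ^ m = (of_int a + of_int b * sqrtD) / 2" "OD_parity a b" "a \<ge> 1" "b \<ge> 1"
    by (rule unit_OD_gt_1_coords)
  have "real_of_int (a\<^sup>2 - D * b\<^sup>2) = of_int (4 * (-1) ^ m)"
    using qnorm_fund_unit_power[of m] unfolding ab(1) qnorm_half_int by simp
  then have norm: "a\<^sup>2 - D * b\<^sup>2 = 4 * (-1) ^ m" by (simp only: of_int_eq_iff)
  have F: "F_D D m = of_int b / of_int disc_factor" using F_D_of_coords[OF ab(1)] .
  show ?thesis
  proof (cases "D mod 4 = 1")
    case True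
    then show ?thesis using norm ab F unfolding ell_def disc_factor_def
      by (intro exI[of _ b] exI[of _ a]) auto
  next
    case False
    then obtain a' b' where "a = 2 * a'" "b = 2 * b'"
      using ab(2) unfolding OD_parity_def by (auto elim!: evenE)
    then show ?thesis using False norm ab F unfolding ell_def disc_factor_def
      by (intro exI[of _ b'] exI[of _ a']) (auto simp: power_mult_distrib)
  qed
qed

lemma Pell_imp_F_D:
  assumes "x > 0" "y > 0" "\<sigma> = 1 \<or> \<sigma> = -1" and Pell: "y\<^sup>2 - D * x\<^sup>2 = \<sigma> * ell"
  shows "\<exists>m\<ge>1. F_D D m = of_int x \<and> (-1) ^ m = \<sigma>"
proof -
  define a b where "a = disc_factor * y" and "b = disc_factor * x"
  have "OD_parity a b"
  proof (cases "D mod 4 = 1")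
    case True
    then obtain j where j: "D = 4 * j + 1" by (metis div_mult_mod_eq add.commute mult.commute)
    have "(y - x) * (y + x) = (y\<^sup>2 - D * x\<^sup>2) + (D - 1) * x\<^sup>2" by (simp add: algebra_simps power2_eq_square)
    also have "\<dots> = 2 * (2 * (\<sigma> + j * x\<^sup>2))" using Pell True j unfolding ell_def by (simp add: algebra_simps)
    finally have "even ((y - x) * (y + x))" by simp
    then have "y mod 2 = x mod 2" by auto presburger+
    then show ?thesis using True unfolding OD_parity_def a_def b_def disc_factor_def by simp
  qed (simp add: OD_parity_def a_def b_def disc_factor_def)
  define u where "u = (of_int a + of_int b * sqrtD) / 2"
  have "in_OD D u" using \<open>OD_parity a b\<close> unfolding u_def in_OD_iff by blast
  have "qnorm D u = of_int (disc_factor\<^sup>2 * (y\<^sup>2 - D * x\<^sup>2)) / 4"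
    unfolding u_def qnorm_half_int a_def b_def by (simp add: algebra_simps power2_eq_square)
  also have "\<dots> = of_int \<sigma>" unfolding Pell by (auto simp: disc_factor_def ell_def)
  finally have "qnorm D u = of_int \<sigma>" .
  then have "unit_OD D u" using \<open>in_OD D u\<close> \<open>\<sigma> = 1 \<or> \<sigma> = -1\<close> unfolding unit_OD_iff_qnorm by auto
  have "a \<ge> 1" "b \<ge> 1" using \<open>x > 0\<close> \<open>y > 0\<close> unfolding a_def b_def disc_factor_def by auto
  have "of_int b * sqrtD \<ge> sqrtD" "real_of_int a \<ge> 1"
    using mult_right_mono[of 1 "of_int b" sqrtD] \<open>a \<ge> 1\<close> \<open>b \<ge> 1\<close> sqrtD_gt_1 by simp_all
  then have "of_int a + of_int b * sqrtD > 2" using sqrtD_gt_1 by linarith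
  then have "u > 1" unfolding u_def by simp
  with \<open>unit_OD D u\<close> obtain m where "m \<ge> 1" "u = \<epsilon> ^ m"
    using unit_OD_gt_1_eq_fund_unit_power by blast
  have "real_of_int ((-1) ^ m) = of_int \<sigma>"
    using qnorm_fund_unit_power[of m] \<open>qnorm D u = of_int \<sigma>\<close> \<open>u = \<epsilon> ^ m\<close> by simp
  moreover have "F_D D m = of_int x"
    using F_D_of_coords[of m a b] \<open>u = \<epsilon> ^ m\<close> unfolding u_def b_def disc_factor_def by auto
  ultimately show ?thesis using \<open>m \<ge> 1\<close> by (metis of_int_eq_iff)
qed

section \<open>The Dirichlet series\<close>

lemma F_D_less_add_2: "F_D D m < F_D D (m + 2)"
proof -
  define d where "d = inverse \<epsilon>"
  have "d > 0" "d < 1" "\<epsilon> * d = 1" using fund_unit_gt_1 unfolding d_def by (auto simp: inverse_less_1_iff)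
  have "\<bar>(-d) ^ m\<bar> \<le> 1" using \<open>d > 0\<close> \<open>d < 1\<close> by (simp add: power_abs power_le_one)
  then have "(-d) ^ m \<ge> -1" by linarith
  then have "(-d) ^ m * (1 - d\<^sup>2) \<ge> (-1) * (1 - d\<^sup>2)"
    using \<open>d > 0\<close> \<open>d < 1\<close> by (intro mult_right_mono) (auto simp: power2_eq_square mult_le_one)
  moreover have "\<epsilon> ^ m * (\<epsilon>\<^sup>2 - 1) \<ge> 1 * (\<epsilon>\<^sup>2 - 1)"
    using fund_unit_gt_1 by (intro mult_right_mono) (auto simp: power2_eq_square less_1_mult less_imp_le)
  moreover have "(\<epsilon> - d)\<^sup>2 > 0" using \<open>d < 1\<close> fund_unit_gt_1 by simp
  then have "\<epsilon>\<^sup>2 + d\<^sup>2 > 2" using \<open>\<epsilon> * d = 1\<close> by (simp add: power2_eq_square algebra_simps)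
  ultimately have "\<epsilon> ^ m - (-d) ^ m < \<epsilon> ^ m * \<epsilon>\<^sup>2 - (-d) ^ m * d\<^sup>2" by (simp add: algebra_simps)
  also have "\<dots> = \<epsilon> ^ (m + 2) - (-d) ^ (m + 2)" by (simp only: power_add power2_minus)
  finally show ?thesis
    unfolding F_D_eq d_def[symmetric] using disc_factor_sqrtD_pos by (simp add: divide_strict_right_mono)
qed

lemma F_D_lower_bound:
  assumes "m \<ge> 1"
  shows "F_D D m \<ge> (1 - inverse \<epsilon> ^ 2) / (of_int disc_factor * sqrtD) * \<epsilon> ^ m"
proof -
  define d where "d = inverse \<epsilon>"
  have "d > 0" "d < 1" "\<epsilon> * d = 1" using fund_unit_gt_1 unfolding d_def by (auto simp: inverse_less_1_iff)
  have "(-d) ^ m \<le> d\<^sup>2 * \<epsilon> ^ m"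
  proof (cases "m = 1")
    case True
    have "0 \<le> d\<^sup>2 * \<epsilon> ^ m" using fund_unit_gt_1 by simp
    then show ?thesis using True \<open>d > 0\<close> by simp
  next
    case False
    have "(-d) ^ m \<le> d ^ m" using \<open>d > 0\<close> by (metis abs_ge_self power_abs abs_minus_cancel abs_of_pos)
    also have "\<dots> \<le> d\<^sup>2" using \<open>d > 0\<close> \<open>d < 1\<close> False assms by (intro power_decreasing) auto
    also have "\<dots> \<le> d\<^sup>2 * \<epsilon> ^ m" using mult_left_mono[of 1 "\<epsilon> ^ m" "d\<^sup>2"] fund_unit_gt_1 by simp
    finally show ?thesis .
  qed
  then have "(1 - d\<^sup>2) * \<epsilon> ^ m \<le> \<epsilon> ^ m - (-d) ^ m" by (simp add: algebra_simps)
  then show ?thesis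
    unfolding F_D_eq d_def[symmetric] using disc_factor_sqrtD_pos by (simp add: divide_right_mono)
qed

lemma summable_F_D_powr:
  assumes "Re s > 0" and "j \<ge> 1"
  shows "summable (\<lambda>k. complex_of_real (F_D D (2 * k + j)) powr (- s))"
proof -
  define K where "K = (1 - inverse \<epsilon> ^ 2) / (of_int disc_factor * sqrtD)"
  define r where "r = \<epsilon> powr (- Re s)"
  have "inverse \<epsilon> ^ 2 < 1" using fund_unit_gt_1 by (simp add: power_less_one_iff inverse_less_1_iff)
  then have "K > 0" unfolding K_def using disc_factor_sqrtD_pos by simp
  have "r > 0" "r < 1" unfolding r_def using fund_unit_gt_1 assms(1) by (auto intro: powr_less_one)
  have bound: "norm (complex_of_real (F_D D (2 * k + j)) powr (- s)) \<le> K powr (- Re s) * r ^ j * (r\<^sup>2) ^ k"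
    for k
  proof -
    define m where "m = 2 * k + j"
    have "F_D D m \<ge> K * \<epsilon> ^ m" using F_D_lower_bound[of m] assms(2) unfolding K_def m_def by simp
    have "K * \<epsilon> ^ m > 0" using \<open>K > 0\<close> fund_unit_gt_1 by simp
    have "norm (complex_of_real (F_D D m) powr (- s)) = F_D D m powr (- Re s)"
      using \<open>F_D D m \<ge> K * \<epsilon> ^ m\<close> \<open>K * \<epsilon> ^ m > 0\<close> by (subst norm_powr_real_powr) auto
    also have "\<dots> \<le> (K * \<epsilon> ^ m) powr (- Re s)"
      using assms(1) \<open>F_D D m \<ge> K * \<epsilon> ^ m\<close> \<open>K * \<epsilon> ^ m > 0\<close> by (intro powr_mono2') auto
    also have "\<dots> = K powr (- Re s) * r ^ m"
      using \<open>K > 0\<close> fund_unit_gt_1 unfolding r_def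
      by (simp add: powr_mult powr_realpow[symmetric] powr_powr powr_power mult.commute)
    also have "r ^ m = r ^ j * (r\<^sup>2) ^ k" unfolding m_def by (simp add: power_add power_mult)
    finally show ?thesis unfolding m_def by (simp add: mult.assoc)
  qed
  have "summable (\<lambda>k. K powr (- Re s) * r ^ j * (r\<^sup>2) ^ k)"
    using \<open>r > 0\<close> \<open>r < 1\<close> by (intro summable_mult summable_geometric) (simp add: power_less_one_iff)
  then show ?thesis using bound by (rule summable_comparison_test')
qed

lemma Pell_term_at_F_D:
  assumes "m \<ge> 1" "F_D D m = of_int x" "x > 0" "int (Suc n) = x\<^sup>2"
  shows "of_nat (r1 (int (Suc n)) * r1 (D * int (Suc n) + (-1) ^ m * ell)) / of_nat (Suc n) powr (s / 2)
    = 4 * complex_of_real (F_D D m) powr (- s)"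
proof -
  obtain x' y where "y > 0" "F_D D m = of_int x'" and Pell: "y\<^sup>2 - D * x'\<^sup>2 = (-1) ^ m * ell"
    using F_D_Pell[OF \<open>m \<ge> 1\<close>] by blast
  then have "x' = x" using assms(2) by simp
  have "r1 (int (Suc n)) = 2" using r1_power2[of x] assms(3,4) by simp
  moreover have "r1 (D * int (Suc n) + (-1) ^ m * ell) = 2"
    using r1_power2[of y] \<open>y > 0\<close> Pell \<open>x' = x\<close> assms(4) by (simp add: algebra_simps)
  moreover have "real_of_int (int (Suc n)) = real_of_int (x\<^sup>2)" using assms(4) by (rule arg_cong)
  then have "real (Suc n) = (real_of_int x)\<^sup>2" by (simp only: of_int_of_nat_eq of_int_power)
  then have "(of_nat (Suc n) :: complex) = complex_of_real ((real_of_int x)\<^sup>2)"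
    by (metis of_real_of_nat_eq)
  moreover have "complex_of_real ((real_of_int x)\<^sup>2) powr (s / 2) = complex_of_real (of_int x) powr s"
    using assms(3) by (intro of_real_power2_powr_half) simp
  ultimately show ?thesis using assms(2) by (simp add: powr_minus field_simps)
qed

lemma Pell_term_ne_0_imp_F_D:
  assumes "r1 (int (Suc n)) \<noteq> 0" "r1 (D * int (Suc n) + \<sigma> * ell) \<noteq> 0" "\<sigma> = 1 \<or> \<sigma> = -1"
  obtains m x where "m \<ge> 1" "x > 0" "F_D D m = of_int x" "int (Suc n) = x\<^sup>2" "(-1) ^ m = \<sigma>"
proof -
  obtain x where x: "x\<^sup>2 = int (Suc n)" using r1_neq_0_imp_square[OF assms(1)] by blast
  obtain y where y: "y\<^sup>2 = D * int (Suc n) + \<sigma> * ell" using r1_neq_0_imp_square[OF assms(2)] by blast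
  have x_abs: "\<bar>x\<bar>\<^sup>2 = int (Suc n)" "\<bar>x\<bar> > 0" using x by (auto simp: zero_less_abs_iff)
  have Pell: "\<bar>y\<bar>\<^sup>2 - D * \<bar>x\<bar>\<^sup>2 = \<sigma> * ell" using x y by simp
  have "1 \<le> \<bar>x\<bar>\<^sup>2" using x_abs(1) by simp
  then have "D * 1 \<le> D * \<bar>x\<bar>\<^sup>2" using D_gt_1 by (intro mult_left_mono) simp_all
  moreover have "\<sigma> * ell \<ge> - ell" using assms(3) ell_bounds by auto
  ultimately have "\<bar>y\<bar>\<^sup>2 > 0" using Pell ell_bounds by linarith
  then have "\<bar>y\<bar> > 0" by (cases "y = 0") auto
  then obtain m where "m \<ge> 1" "F_D D m = of_int \<bar>x\<bar>" "(-1) ^ m = \<sigma>"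
    using Pell_imp_F_D[OF x_abs(2) _ assms(3) Pell] by blast
  then show ?thesis using that[of m "\<bar>x\<bar>"] x_abs by simp
qed

lemma sum_F_D_progression:
  assumes "Re s > 0" and j: "j = 1 \<or> j = 2"
  shows "(\<Sum>k. complex_of_real (F_D D (2 * k + j)) powr (- s)) =
    1/4 * (\<Sum>n. of_nat (r1 (int (Suc n)) * r1 (D * int (Suc n) + (-1) ^ j * ell))
                 / of_nat (Suc n) powr (s / 2))"
proof -
  define g where "g k = complex_of_real (F_D D (2 * k + j)) powr (- s)" for k
  define f :: "nat \<Rightarrow> complex"
    where "f n = of_nat (r1 (int (Suc n)) * r1 (D * int (Suc n) + (-1) ^ j * ell)) / of_nat (Suc n) powr (s / 2)"
    for n
  have "\<exists>x. F_D D (2 * k + j) = of_int x \<and> x > 0" for k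
    using F_D_Pell[of "2 * k + j"] j by auto
  then obtain x where x: "\<And>k. F_D D (2 * k + j) = of_int (x k)" and x_pos: "\<And>k. x k > 0" by metis
  define h where "h k = nat ((x k)\<^sup>2) - 1" for k
  have h: "int (Suc (h k)) = (x k)\<^sup>2" for k
    using x_pos[of k] unfolding h_def by (simp add: Suc_nat_eq_nat_zadd1 order.strict_iff_not)
  have "strict_mono h"
  proof (rule strict_monoI_Suc)
    fix k
    have "F_D D (2 * k + j) < F_D D (2 * Suc k + j)" using F_D_less_add_2[of "2 * k + j"] by simp
    then have "x k < x (Suc k)" unfolding x by simp
    then have "int (Suc (h k)) < int (Suc (h (Suc k)))" unfolding h using x_pos[of k] by (simp add: power_strict_mono)
    then show "h k < h (Suc k)" by simp
  qed
  have f_h: "f (h k) = 4 * g k" for k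
  proof -
    have "2 * k + j \<ge> 1" "(-1) ^ (2 * k + j) = ((-1) ^ j :: int)" using j by (auto simp: power_add)
    then show ?thesis
      using Pell_term_at_F_D[OF \<open>2 * k + j \<ge> 1\<close> x x_pos h, of s] unfolding f_def g_def by simp
  qed
  have f_0: "f n = 0" if "n \<notin> range h" for n
  proof (rule ccontr)
    assume "f n \<noteq> 0"
    then have "r1 (int (Suc n)) \<noteq> 0" "r1 (D * int (Suc n) + (-1) ^ j * ell) \<noteq> 0" unfolding f_def by auto
    moreover have "(-1) ^ j = (1::int) \<or> (-1) ^ j = (-1::int)" by (simp add: minus_one_power_iff)
    ultimately obtain m y where m: "m \<ge> 1" "y > 0" "F_D D m = of_int y" "int (Suc n) = y\<^sup>2"
      "(-1) ^ m = ((-1) ^ j :: int)"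
      by (elim Pell_term_ne_0_imp_F_D)
    then obtain k where "m = 2 * k + j" using j by (metis neg_one_power_eq_imp_progression)
    then have "y = x k" using m(3) x[of k] by simp
    then have "h k = n" using m(4) h[of k] by simp
    with that show False by auto
  qed
  have "summable g" using summable_F_D_powr[OF assms(1), of j] j unfolding g_def by auto
  then have "g sums suminf g" by (rule summable_sums)
  then have "(\<lambda>k. f (h k)) sums (4 * suminf g)" unfolding f_h by (rule sums_mult)
  then have "f sums (4 * suminf g)" using sums_mono_reindex[of h f, OF \<open>strict_mono h\<close> f_0] by blast
  then show ?thesis unfolding f_def[symmetric] g_def[symmetric] by (simp add: sums_iff)
qed

end

theorem mainTheorem10:
  fixes D :: int and s :: complex and l :: int
  assumes "D > 1" and "squarefree D"
    and "qnorm D (fund_unit D) = -1"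
    and "l = (if D mod 4 = 1 then 4 else 1)"
    and "Re s > 0"
  shows "summable (\<lambda>n. complex_of_real (F_D D (2 * Suc n - 1)) powr (- s)) \<and>
         summable (\<lambda>n. complex_of_real (F_D D (2 * Suc n)) powr (- s)) \<and>
         Z_odd D s = 1/4 * (\<Sum>n. of_nat (r1 (int (Suc n)) * r1 (D * int (Suc n) - l))
                                   / of_nat (Suc n) powr (s / 2)) \<and>
         Z_even D s = 1/4 * (\<Sum>n. of_nat (r1 (int (Suc n)) * r1 (D * int (Suc n) + l))
                                   / of_nat (Suc n) powr (s / 2))"
proof -
  interpret real_quadratic_negative_unit D
    using assms(1-3) sqrt_of_int_notin_Rats by unfold_locales auto
  have "ell = l" using assms(4) unfolding ell_def by simp
  have odd: "2 * Suc n - 1 = 2 * n + 1" and even: "2 * Suc n = 2 * n + 2" for n :: nat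
    by simp_all
  show ?thesis
    unfolding Z_odd_def Z_even_def odd even
    using summable_F_D_powr[OF assms(5), of 1] summable_F_D_powr[OF assms(5), of 2]
      sum_F_D_progression[OF assms(5), of 1] sum_F_D_progression[OF assms(5), of 2] \<open>ell = l\<close>
    by simp
qed

end
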